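(* Let $\epsilon>0$ and $\beta\ge 2+\epsilon$ be constants, let $n$ be even, and let $G=G(n,p)$ be the Erdős–Rényi random graph on $V=\{1,\dots,n\}$ with $p=\beta\log n/n$. Fix, independently of the random graph, any two disjoint sets $N_1,N_2\subseteq V$ with $|N_1|=|N_2|=n/2$. Then, with probability tending to $1$ as $n\to\infty$: (i) $N_1,N_2$ form a $2$-partition of $G$; (ii) $M^G_{k,n}\le 2M^C_{k,n/2}+2$ for every $k\ge1$, which is $O(2k\log(n/(2k)))+2$.
   Context: $G(n,p)$ includes each of the $\binom n2$ possible edges independently with probability $p$. A set $S\subseteq V$ is a hub for $U\subseteq V$ if the induced subgraph $G_S$ is connected and every $u\in U$ has a neighbor in $S$. Pairwise disjoint sets $N_1,\dots,N_r$ form an $r$-partition of $G$ if $\bigcup_i N_i=V$ and, for every $i$, $V\setminus N_i$ is a hub for $N_i$. A measurement matrix for $G$ is a $0$-$1$ matrix with columns indexed by $V$ in which every nonzero row has a support that induces a connected subgraph of $G$. A vector is $k$-sparse if it has at most $k$ nonzero entries. $A$ identifies all $k$-sparse vectors if $Ax_1\ne Ax_2$ for every two distinct $k$-sparse $x_1,x_2\in\mathbb{R}^n$. $M^G_{k,n}$ is the minimum number of rows of a measurement matrix for $G$ that identifies all $k$-sparse vectors. $M^C_{k,N}$ is the minimum number of rows of an arbitrary $0$-$1$ matrix with $N$ columns that identifies all $k$-sparse vectors in $\mathbb{R}^N$. *)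

theory Defs
  imports "HOL-Probability.Probability"
begin

text \<open>Vertex set V = {1..n}. The random graph G(n,p): each unordered pair {i,j}
 (encoded as (i,j) with i < j) is an edge independently with probability p.\<close>

definition vpairs :: "nat \<Rightarrow> (nat \<times> nat) set" where
  "vpairs n = {(i,j). 1 \<le> i \<and> i < j \<and> j \<le> n}"

definition Gnp :: "nat \<Rightarrow> real \<Rightarrow> (nat \<times> nat \<Rightarrow> bool) pmf" where
  "Gnp n p = Pi_pmf (vpairs n) False (\<lambda>_. bernoulli_pmf p)"

definition adj :: "(nat \<times> nat \<Rightarrow> bool) \<Rightarrow> nat \<Rightarrow> nat \<Rightarrow> bool" where
  "adj f u v = (u \<noteq> v \<and> f (min u v, max u v))"

definition connected_in :: "(nat \<Rightarrow> nat \<Rightarrow> bool) \<Rightarrow> nat set \<Rightarrow> bool" where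
  "connected_in E S = (S \<noteq> {} \<and>
     (\<forall>u\<in>S. \<forall>v\<in>S. (u, v) \<in> {(a, b). a \<in> S \<and> b \<in> S \<and> E a b}\<^sup>*))"

definition is_hub :: "(nat \<Rightarrow> nat \<Rightarrow> bool) \<Rightarrow> nat set \<Rightarrow> nat set \<Rightarrow> bool" where
  "is_hub E S U = (connected_in E S \<and> (\<forall>u\<in>U. \<exists>s\<in>S. E u s))"

definition r_partition :: "nat set \<Rightarrow> (nat \<Rightarrow> nat \<Rightarrow> bool) \<Rightarrow> nat \<Rightarrow> (nat \<Rightarrow> nat set) \<Rightarrow> bool" where
  "r_partition V E r N =
     ((\<forall>i\<in>{1..r}. \<forall>j\<in>{1..r}. i \<noteq> j \<longrightarrow> N i \<inter> N j = {}) \<and>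
      (\<Union>i\<in>{1..r}. N i) = V \<and>
      (\<forall>i\<in>{1..r}. is_hub E (V - N i) (N i)))"

text \<open>A 0-1 matrix with columns indexed by V is represented by the list of its row supports;
 (A x)_r = sum of x over the r-th row support. Vectors in R^V are functions vanishing off V.\<close>

definition sparse_vec :: "nat set \<Rightarrow> nat \<Rightarrow> (nat \<Rightarrow> real) \<Rightarrow> bool" where
  "sparse_vec V k x = ((\<forall>i. i \<notin> V \<longrightarrow> x i = 0) \<and> card {i. x i \<noteq> 0} \<le> k)"

definition mat_apply :: "nat set list \<Rightarrow> (nat \<Rightarrow> real) \<Rightarrow> real list" where
  "mat_apply A x = map (\<lambda>S. \<Sum>i\<in>S. x i) A"

definition identifies :: "nat set \<Rightarrow> nat \<Rightarrow> nat set list \<Rightarrow> bool" where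
  "identifies V k A = (\<forall>x1 x2. sparse_vec V k x1 \<longrightarrow> sparse_vec V k x2 \<longrightarrow> x1 \<noteq> x2
       \<longrightarrow> mat_apply A x1 \<noteq> mat_apply A x2)"

definition zero_one_matrix :: "nat set \<Rightarrow> nat set list \<Rightarrow> bool" where
  "zero_one_matrix V A = (\<forall>S\<in>set A. S \<subseteq> V)"

definition measurement_matrix :: "nat set \<Rightarrow> (nat \<Rightarrow> nat \<Rightarrow> bool) \<Rightarrow> nat set list \<Rightarrow> bool" where
  "measurement_matrix V E A = (zero_one_matrix V A \<and> (\<forall>S\<in>set A. S \<noteq> {} \<longrightarrow> connected_in E S))"

definition MG :: "nat set \<Rightarrow> (nat \<Rightarrow> nat \<Rightarrow> bool) \<Rightarrow> nat \<Rightarrow> nat" where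
  "MG V E k = (LEAST m. \<exists>A. length A = m \<and> measurement_matrix V E A \<and> identifies V k A)"

definition MC :: "nat \<Rightarrow> nat \<Rightarrow> nat" where
  "MC k N = (LEAST m. \<exists>A. length A = m \<and> zero_one_matrix {1..N} A \<and> identifies {1..N} k A)"

end

theory Submission
  imports Defs "HOL-Real_Asymp.Real_Asymp"
begin

(* Two disjoint halves N1, N2 of V = {1..2m} form a 2-partition of G exactly when each half
   is a hub for the other: G[N1] and G[N2] are connected and every vertex of one half has a
   neighbour in the other.  In that situation an arbitrary 0-1 matrix A identifying k-sparse
   vectors of length m is turned into a graph-constrained one: transport each row S of A into
   N1 along a bijection and add all of N2, which makes the row connected; one extra row N2
   recovers the sum over the transported part.  Doing this for both halves gives
   M^G_{k,2m} <= 2 M^C_{k,m} + 2 deterministically.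

   It remains to show that both halves are hubs for each other with probability tending to 1.
   A half fails to be connected only if some nonempty set T of at most m/2 of its vertices
   has no edges to the rest of the half; a vertex fails to be dominated only if it has no edge
   into the other half.  The union bound gives failure probability at most
   2 (cut_sum m p + m (1-p)^m), and for p = beta ln(2m)/(2m) with beta >= 2 + eps both terms
   are shown to vanish: the second is at most (2m)^(-eps/2), the first is dominated by a
   geometric series whose ratio tends to 0. *)

section \<open>Graph-theoretic facts\<close>

lemma adj_sym: "adj f u v = adj f v u"
  by (auto simp: adj_def min_def max_def)

text \<open>A disconnected finite vertex set splits off a nonempty part of at most half its size
  with no edges to the remainder (the smaller of a component and its complement).\<close>
lemma disconnected_small_cut:
  assumes S: "S \<noteq> {}" "finite S" and nc: "\<not> connected_in E S" and sym: "\<And>a b. E a b = E b a"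
  shows "\<exists>T. T \<subseteq> S \<and> T \<noteq> {} \<and> 2 * card T \<le> card S \<and> (\<forall>a\<in>T. \<forall>b\<in>S-T. \<not> E a b)"
proof -
  define R where "R = {(a, b). a \<in> S \<and> b \<in> S \<and> E a b}"
  obtain u v where uv: "u \<in> S" "v \<in> S" "(u,v) \<notin> R\<^sup>*"
    using nc S unfolding connected_in_def R_def by auto
  define C where "C = {w\<in>S. (u,w) \<in> R\<^sup>*}"
  have uC: "u \<in> C" and vC: "v \<notin> C" and CS: "C \<subseteq> S" using uv by (auto simp: C_def)
  have noE: "\<not> E a b" if "a \<in> C" "b \<in> S - C" for a b
  proof
    assume "E a b"
    hence "(a,b) \<in> R" using that CS by (auto simp: R_def)
    hence "(u,b) \<in> R\<^sup>*" using that by (auto simp: C_def intro: rtrancl_into_rtrancl)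
    thus False using that by (auto simp: C_def)
  qed
  have finC: "finite C" using CS S finite_subset by blast
  have card_compl: "card (S - C) = card S - card C" using CS finC by (simp add: card_Diff_subset)
  have "card C \<le> card S" using CS S card_mono by blast
  show ?thesis
  proof (cases "2 * card C \<le> card S")
    case True thus ?thesis using uC CS noE by (intro exI[of _ C]) auto
  next
    case False
    have "S - C \<noteq> {}" using uv vC by auto
    moreover have "\<forall>a\<in>S-C. \<forall>b\<in>S-(S-C). \<not> E a b" using noE CS sym by (metis Diff_iff double_diff order_refl)
    ultimately show ?thesis using False card_compl \<open>card C \<le> card S\<close> by (intro exI[of _ "S - C"]) auto
  qed
qed

text \<open>Adding vertices that are dominated by a connected set keeps it connected; this is why
  every row of the lifted measurement matrix is connected.\<close>
lemma connected_in_dominated_union: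
  assumes H: "connected_in E H" and T: "\<forall>t\<in>T. \<exists>s\<in>H. E t s" and sym: "\<And>a b. E a b = E b a"
  shows "connected_in E (T \<union> H)"
proof -
  define R where "R = {(a, b). a \<in> T \<union> H \<and> b \<in> T \<union> H \<and> E a b}"
  have inside: "(a,b) \<in> R\<^sup>*" if "a \<in> H" "b \<in> H" for a b
  proof -
    have "(a,b) \<in> {(a, b). a \<in> H \<and> b \<in> H \<and> E a b}\<^sup>*" using H that by (auto simp: connected_in_def)
    moreover have "{(a, b). a \<in> H \<and> b \<in> H \<and> E a b} \<subseteq> R" by (auto simp: R_def)
    ultimately show ?thesis using rtrancl_mono by blast
  qed
  have to_H: "\<exists>h\<in>H. (a,h) \<in> R\<^sup>* \<and> (h,a) \<in> R\<^sup>*" if a: "a \<in> T \<union> H" for a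
  proof (cases "a \<in> H")
    case False
    then obtain s where "s \<in> H" "E a s" using T a by auto
    hence "(a,s) \<in> R" "(s,a) \<in> R" using a sym by (auto simp: R_def)
    thus ?thesis using \<open>s \<in> H\<close> by blast
  qed blast
  have "(u,v) \<in> R\<^sup>*" if "u \<in> T \<union> H" "v \<in> T \<union> H" for u v
    using to_H[OF that(1)] to_H[OF that(2)] inside by (meson rtrancl_trans)
  moreover have "H \<noteq> {}" using H by (auto simp: connected_in_def)
  ultimately show ?thesis unfolding connected_in_def R_def by auto
qed

lemma halves_cover:
  assumes "N1 \<subseteq> {1..2*m}" "N2 \<subseteq> {1..2*m}" "N1 \<inter> N2 = {}" "card N1 = m" "card N2 = m"
  shows "{1..2*m} = N1 \<union> N2"
proof -
  have "finite N1" "finite N2" using assms(1,2) finite_subset by blast+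
  hence "card (N1 \<union> N2) = card {1..2*m}" using card_Un_disjoint[of N1 N2] assms(3-5) by simp
  thus ?thesis using assms(1,2) by (metis card_subset_eq finite_atLeastAtMost le_sup_iff)
qed

lemma two_partition_iff_hubs:
  assumes "V = N1 \<union> N2" and "N1 \<inter> N2 = {}"
  shows "r_partition V E 2 (\<lambda>i. if i = 1 then N1 else N2) \<longleftrightarrow> is_hub E N2 N1 \<and> is_hub E N1 N2"
proof -
  have "{1..2::nat} = {1, 2}" by auto
  moreover have "V - N1 = N2" "V - N2 = N1" using assms by auto
  ultimately show ?thesis using assms unfolding r_partition_def by auto
qed

section \<open>The deterministic bound on the number of measurements\<close>

text \<open>M^C is attained: the identity matrix shows that the defining set is nonempty.\<close>
lemma MC_attained: "\<exists>A. length A = MC k N \<and> zero_one_matrix {1..N} A \<and> identifies {1..N} k A"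
proof -
  define A where "A = map (\<lambda>i. {i}) [1..<N+1]"
  have "zero_one_matrix {1..N} A" by (auto simp: A_def zero_one_matrix_def)
  moreover have "identifies {1..N} k A"
    unfolding identifies_def
  proof (intro allI impI notI)
    fix x1 x2 :: "nat \<Rightarrow> real"
    assume "sparse_vec {1..N} k x1" "sparse_vec {1..N} k x2" "x1 \<noteq> x2"
      and "mat_apply A x1 = mat_apply A x2"
    hence "map x1 [1..<N+1] = map x2 [1..<N+1]" by (simp add: mat_apply_def A_def comp_def)
    hence "\<forall>i\<in>{1..N}. x1 i = x2 i" by (simp add: map_eq_conv atLeastLessThanSuc_atLeastAtMost del: upt_Suc)
    moreover have "\<forall>i. i \<notin> {1..N} \<longrightarrow> x1 i = x2 i"
      using \<open>sparse_vec {1..N} k x1\<close> \<open>sparse_vec {1..N} k x2\<close> by (simp add: sparse_vec_def)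
    ultimately show False using \<open>x1 \<noteq> x2\<close> by blast
  qed
  ultimately have "\<exists>m A. length A = m \<and> zero_one_matrix {1..N} A \<and> identifies {1..N} k A" by blast
  from LeastI_ex[OF this] show ?thesis unfolding MC_def .
qed

lemma sparse_vec_pullback:
  assumes x: "sparse_vec V k x" and V: "finite V" and h: "inj_on h I"
  shows "sparse_vec I k (\<lambda>i. if i \<in> I then x (h i) else 0)"
proof -
  have "finite {i. x i \<noteq> 0}"
    using x V unfolding sparse_vec_def by (metis (mono_tags, lifting) finite_subset mem_Collect_eq subsetI)
  moreover have "inj_on h {i. (if i \<in> I then x (h i) else 0) \<noteq> 0}"
    using h by (rule inj_on_subset) (auto split: if_splits)
  moreover have "h ` {i. (if i \<in> I then x (h i) else 0) \<noteq> 0} \<subseteq> {i. x i \<noteq> 0}"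
    by (auto split: if_splits)
  ultimately have "card {i. (if i \<in> I then x (h i) else 0) \<noteq> 0} \<le> card {i. x i \<noteq> 0}"
    by (intro card_inj_on_le)
  thus ?thesis using x unfolding sparse_vec_def by auto
qed

definition lift_rows :: "(nat \<Rightarrow> nat) \<Rightarrow> nat set \<Rightarrow> nat set list \<Rightarrow> nat set list" where
  "lift_rows h H A = map (\<lambda>S. h ` S \<union> H) A @ [H]"

lemma lift_rows_measurement_matrix:
  assumes h: "bij_betw h {1..m} N" and A: "zero_one_matrix {1..m} A" and hub: "is_hub E H N"
    and V: "N \<union> H \<subseteq> V" and sym: "\<And>a b. E a b = E b a"
  shows "measurement_matrix V E (lift_rows h H A)"
proof -
  have img: "h ` S \<subseteq> N" if "S \<in> set A" for S
    using h A that unfolding bij_betw_def zero_one_matrix_def by blast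
  have "connected_in E H" and "\<forall>u\<in>N. \<exists>s\<in>H. E u s" using hub by (auto simp: is_hub_def)
  hence "connected_in E (h ` S \<union> H)" if "S \<in> set A" for S
    using connected_in_dominated_union img[OF that] sym by (metis subsetD)
  thus ?thesis using img V \<open>connected_in E H\<close>
    unfolding measurement_matrix_def zero_one_matrix_def lift_rows_def by auto
qed

text \<open>The lifted measurements of two k-sparse vectors agree only if the vectors agree on N:
  subtracting the last row recovers A applied to the pullbacks along h.\<close>
lemma lift_rows_determine:
  assumes h: "bij_betw h {1..m} N" and disj: "N \<inter> H = {}" and fH: "finite H"
    and A: "zero_one_matrix {1..m} A" and idf: "identifies {1..m} k A"
    and x1: "sparse_vec V k x1" and x2: "sparse_vec V k x2" and fV: "finite V"
    and eq: "mat_apply (lift_rows h H A) x1 = mat_apply (lift_rows h H A) x2"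
  shows "\<forall>i\<in>N. x1 i = x2 i"
proof -
  define y1 where "y1 = (\<lambda>i. if i \<in> {1..m} then x1 (h i) else 0)"
  define y2 where "y2 = (\<lambda>i. if i \<in> {1..m} then x2 (h i) else 0)"
  have eH: "sum x1 H = sum x2 H" using eq by (simp add: mat_apply_def lift_rows_def)
  have "sum y1 S = sum y2 S" if S: "S \<in> set A" for S
  proof -
    have Sm: "S \<subseteq> {1..m}" and "finite S" using A S by (auto simp: zero_one_matrix_def finite_subset)
    have inj: "inj_on h S" using h Sm by (meson bij_betw_def inj_on_subset)
    have "h ` S \<inter> H = {}" using h Sm disj unfolding bij_betw_def by blast
    moreover have "sum x1 (h ` S \<union> H) = sum x2 (h ` S \<union> H)"
      using eq S by (simp add: mat_apply_def lift_rows_def map_eq_conv)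
    ultimately have "sum x1 (h ` S) = sum x2 (h ` S)"
      using eH \<open>finite S\<close> fH by (simp add: sum.union_disjoint)
    moreover have "sum y1 S = sum x1 (h ` S)" "sum y2 S = sum x2 (h ` S)"
      using Sm by (auto simp: y1_def y2_def sum.reindex[OF inj] intro!: sum.cong)
    ultimately show ?thesis by simp
  qed
  hence "mat_apply A y1 = mat_apply A y2" by (simp add: mat_apply_def)
  moreover have "inj_on h {1..m}" using h by (simp add: bij_betw_def)
  ultimately have "y1 = y2"
    using idf sparse_vec_pullback[OF x1 fV] sparse_vec_pullback[OF x2 fV]
    unfolding identifies_def y1_def y2_def by blast
  show ?thesis
  proof
    fix i assume "i \<in> N"
    then obtain j where "j \<in> {1..m}" "i = h j" using h unfolding bij_betw_def by auto
    thus "x1 i = x2 i" using fun_cong[OF \<open>y1 = y2\<close>, of j] by (simp add: y1_def y2_def)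
  qed
qed

text \<open>Main deterministic result: a 2-partition into two halves of size m yields
  M^G_k <= 2 M^C_{k,m} + 2, by stacking the lifts of an optimal matrix into both halves.\<close>
lemma MG_le_of_two_partition:
  assumes V: "V = N1 \<union> N2" "finite V" and disj: "N1 \<inter> N2 = {}"
    and c1: "card N1 = m" and c2: "card N2 = m"
    and part: "r_partition V E 2 (\<lambda>i. if i = 1 then N1 else N2)" and sym: "\<And>a b. E a b = E b a"
  shows "MG V E k \<le> 2 * MC k m + 2"
proof -
  have fN: "finite N1" "finite N2" using V finite_subset by blast+
  have hubs: "is_hub E N2 N1" "is_hub E N1 N2" using part two_partition_iff_hubs[OF V(1) disj] by auto
  obtain A where A: "length A = MC k m" "zero_one_matrix {1..m} A" "identifies {1..m} k A"
    using MC_attained by blast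
  obtain g1 where g1: "bij_betw g1 {1..m} N1" using finite_same_card_bij[OF _ fN(1)] c1 by force
  obtain g2 where g2: "bij_betw g2 {1..m} N2" using finite_same_card_bij[OF _ fN(2)] c2 by force
  define R1 where "R1 = lift_rows g1 N2 A"
  define R2 where "R2 = lift_rows g2 N1 A"
  have "measurement_matrix V E R1" "measurement_matrix V E R2"
    unfolding R1_def R2_def using V(1)
    by (auto intro!: lift_rows_measurement_matrix g1 g2 A(2) hubs sym)
  hence "measurement_matrix V E (R1 @ R2)" unfolding measurement_matrix_def zero_one_matrix_def by auto
  moreover have "identifies V k (R1 @ R2)"
    unfolding identifies_def
  proof (intro allI impI notI)
    fix x1 x2 assume x: "sparse_vec V k x1" "sparse_vec V k x2" "x1 \<noteq> x2"
      and eq: "mat_apply (R1 @ R2) x1 = mat_apply (R1 @ R2) x2"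
    have "mat_apply R1 x1 = mat_apply R1 x2 \<and> mat_apply R2 x1 = mat_apply R2 x2"
      using eq by (simp add: mat_apply_def)
    hence "\<forall>i\<in>N1. x1 i = x2 i" and "\<forall>i\<in>N2. x1 i = x2 i"
      using lift_rows_determine[OF g1 disj fN(2) A(2,3) x(1,2) V(2)]
        lift_rows_determine[OF g2 _ fN(1) A(2,3) x(1,2) V(2)] disj
      unfolding R1_def R2_def by (simp_all add: Int_commute)
    moreover have "\<forall>i. i \<notin> V \<longrightarrow> x1 i = x2 i" using x by (simp add: sparse_vec_def)
    ultimately have "x1 = x2" using V(1) by blast
    thus False using x(3) by simp
  qed
  ultimately have "MG V E k \<le> length (R1 @ R2)" unfolding MG_def by (blast intro: Least_le)
  thus ?thesis using A(1) by (simp add: R1_def R2_def lift_rows_def)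
qed

section \<open>Failure probabilities in G(n,p)\<close>

lemma finite_vpairs: "finite (vpairs n)"
  by (rule finite_subset[of _ "{1..n} \<times> {1..n}"]) (auto simp: vpairs_def)

lemma prob_no_edges:
  assumes P: "P \<subseteq> vpairs n" and p: "0 \<le> p" "p \<le> 1"
  shows "measure_pmf.prob (Gnp n p) {f. \<forall>e\<in>P. \<not> f e} = (1-p)^card P"
proof -
  define B where "B = (\<lambda>e. if e \<in> P then {False} else (UNIV::bool set))"
  have "{f. \<forall>e\<in>P. \<not> f e} = Pi (vpairs n) B" using P by (auto simp: B_def Pi_def)
  hence "measure_pmf.prob (Gnp n p) {f. \<forall>e\<in>P. \<not> f e}
      = measure_pmf.prob (Gnp n p) (Pi (vpairs n) B)" by simp
  also have "\<dots> = (\<Prod>e\<in>vpairs n. measure_pmf.prob (bernoulli_pmf p) (B e))"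
    unfolding Gnp_def by (rule measure_Pi_pmf_Pi) (rule finite_vpairs)
  also have "\<dots> = (\<Prod>e\<in>vpairs n. if e \<in> P then 1 - p else 1)"
    using p by (intro prod.cong refl) (auto simp: B_def measure_pmf_single)
  also have "\<dots> = (1-p)^card P"
    using P by (subst prod.If_cases) (auto simp: finite_vpairs Int_absorb1)
  finally show ?thesis .
qed

lemma prob_empty_cut:
  assumes A: "A \<subseteq> {1..n}" and B: "B \<subseteq> {1..n}" and AB: "A \<inter> B = {}" and p: "0 \<le> p" "p \<le> 1"
  shows "measure_pmf.prob (Gnp n p) {f. \<forall>a\<in>A. \<forall>b\<in>B. \<not> adj f a b} = (1-p)^(card A * card B)"
proof -
  define g where "g = (\<lambda>(a::nat, b::nat). (min a b, max a b))"
  define P where "P = g ` (A \<times> B)"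
  have "inj_on g (A \<times> B)"
    using AB unfolding inj_on_def g_def by (auto simp: min_def max_def split: if_splits)
  hence cardP: "card P = card A * card B"
    unfolding P_def using card_image by (metis card_cartesian_product)
  have P: "P \<subseteq> vpairs n"
  proof
    fix e assume "e \<in> P"
    then obtain a b where ab: "a \<in> A" "b \<in> B" "e = (min a b, max a b)" unfolding P_def g_def by auto
    have "a \<noteq> b" using ab AB by auto
    moreover have "a \<in> {1..n}" "b \<in> {1..n}" using ab A B by auto
    ultimately show "e \<in> vpairs n" using ab unfolding vpairs_def by (auto simp: min_def max_def)
  qed
  have "{f. \<forall>a\<in>A. \<forall>b\<in>B. \<not> adj f a b} = {f. \<forall>e\<in>P. \<not> f e}"
    using AB unfolding P_def g_def adj_def by fastforce
  thus ?thesis using prob_no_edges[OF P p] cardP by simp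
qed

lemma prob_not_dominated:
  fixes p :: real
  assumes A: "A \<subseteq> {1..n}" and B: "B \<subseteq> {1..n}" and AB: "A \<inter> B = {}" and p: "0 \<le> p" "p \<le> 1"
  shows "measure_pmf.prob (Gnp n p) {f. \<not> (\<forall>u\<in>A. \<exists>s\<in>B. adj f u s)} \<le> card A * (1-p)^card B"
proof -
  have fA: "finite A" using A finite_subset by blast
  have "{f. \<not> (\<forall>u\<in>A. \<exists>s\<in>B. adj f u s)} = (\<Union>u\<in>A. {f. \<forall>a\<in>{u}. \<forall>b\<in>B. \<not> adj f a b})" by auto
  hence "measure_pmf.prob (Gnp n p) {f. \<not> (\<forall>u\<in>A. \<exists>s\<in>B. adj f u s)}
      \<le> (\<Sum>u\<in>A. measure_pmf.prob (Gnp n p) {f. \<forall>a\<in>{u}. \<forall>b\<in>B. \<not> adj f a b})"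
    using measure_pmf.finite_measure_subadditive_finite[OF fA] by simp
  also have "\<dots> = (\<Sum>u\<in>A. (1-p)^card B)"
  proof (rule sum.cong[OF refl])
    fix u assume "u \<in> A"
    hence "{u} \<subseteq> {1..n}" "{u} \<inter> B = {}" using A AB by auto
    thus "measure_pmf.prob (Gnp n p) {f. \<forall>a\<in>{u}. \<forall>b\<in>B. \<not> adj f a b} = (1-p)^card B"
      using prob_empty_cut[of "{u}" n B p] B p by simp
  qed
  finally show ?thesis by simp
qed

text \<open>The union bound over all cuts of an m-set, grouped by the size s = 1..m/2 of the
  smaller side: there are (m choose s) such cuts, each containing s (m - s) pairs.\<close>
definition cut_sum :: "nat \<Rightarrow> real \<Rightarrow> real" where
  "cut_sum m p = (\<Sum>s\<in>{1..m div 2}. real (m choose s) * (1-p)^(s*(m-s)))"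

lemma prob_disconnected:
  assumes S: "S \<subseteq> {1..n}" and cS: "card S = m" and m: "m \<ge> 1" and p: "0 \<le> p" "p \<le> 1"
  shows "measure_pmf.prob (Gnp n p) {f. \<not> connected_in (adj f) S} \<le> cut_sum m p"
proof -
  have fS: "finite S" using S finite_subset by blast
  have Sne: "S \<noteq> {}" using cS m by auto
  define F where "F = (\<lambda>s. {T. T \<subseteq> S \<and> card T = s})"
  define Cuts where "Cuts = (\<Union>s\<in>{1..m div 2}. F s)"
  have finF: "finite (F s)" for s unfolding F_def using fS by auto
  have fC: "finite Cuts" unfolding Cuts_def using finF by auto
  have "{f. \<not> connected_in (adj f) S} \<subseteq> (\<Union>T\<in>Cuts. {f. \<forall>a\<in>T. \<forall>b\<in>S-T. \<not> adj f a b})"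
  proof
    fix f assume "f \<in> {f. \<not> connected_in (adj f) S}"
    then obtain T where T: "T \<subseteq> S" "T \<noteq> {}" "2 * card T \<le> card S" "\<forall>a\<in>T. \<forall>b\<in>S-T. \<not> adj f a b"
      using disconnected_small_cut[where E="adj f", OF Sne fS _ adj_sym] \<open>f \<in> _\<close> by auto
    have "finite T" using T fS finite_subset by blast
    hence "card T \<ge> 1" using T by (simp add: Suc_le_eq card_gt_0_iff)
    hence "T \<in> Cuts" using T cS unfolding Cuts_def F_def by auto
    thus "f \<in> (\<Union>T\<in>Cuts. {f. \<forall>a\<in>T. \<forall>b\<in>S-T. \<not> adj f a b})" using T by auto
  qed
  hence "measure_pmf.prob (Gnp n p) {f. \<not> connected_in (adj f) S}
      \<le> measure_pmf.prob (Gnp n p) (\<Union>T\<in>Cuts. {f. \<forall>a\<in>T. \<forall>b\<in>S-T. \<not> adj f a b})"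
    by (intro measure_pmf.finite_measure_mono) auto
  also have "\<dots> \<le> (\<Sum>T\<in>Cuts. measure_pmf.prob (Gnp n p) {f. \<forall>a\<in>T. \<forall>b\<in>S-T. \<not> adj f a b})"
    using measure_pmf.finite_measure_subadditive_finite[OF fC] by simp
  also have "\<dots> = (\<Sum>T\<in>Cuts. (1-p)^(card T * (m - card T)))"
  proof (rule sum.cong[OF refl])
    fix T assume "T \<in> Cuts"
    hence TS: "T \<subseteq> S" unfolding Cuts_def F_def by auto
    hence "card (S - T) = m - card T" using cS fS by (simp add: card_Diff_subset finite_subset)
    thus "measure_pmf.prob (Gnp n p) {f. \<forall>a\<in>T. \<forall>b\<in>S-T. \<not> adj f a b} = (1-p)^(card T * (m - card T))"
      using prob_empty_cut[of T n "S - T" p] TS S p by auto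
  qed
  also have "\<dots> = (\<Sum>s\<in>{1..m div 2}. \<Sum>T\<in>F s. (1-p)^(card T * (m - card T)))"
    unfolding Cuts_def by (rule sum.UNION_disjoint) (simp, simp add: finF, unfold F_def, blast)
  also have "\<dots> = cut_sum m p"
    unfolding cut_sum_def
  proof (rule sum.cong[OF refl])
    fix s
    have "(\<Sum>T\<in>F s. (1-p)^(card T * (m - card T))) = (\<Sum>T\<in>F s. (1-p)^(s * (m - s)))"
      by (rule sum.cong) (auto simp: F_def)
    also have "\<dots> = real (card (F s)) * (1-p)^(s * (m - s))" by simp
    also have "card (F s) = m choose s" unfolding F_def using n_subsets[OF fS] cS by simp
    finally show "(\<Sum>T\<in>F s. (1-p)^(card T * (m - card T))) = real (m choose s) * (1-p)^(s*(m-s))"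
      by simp
  qed
  finally show ?thesis .
qed

lemma prob_not_hub:
  assumes A: "A \<subseteq> {1..n}" and B: "B \<subseteq> {1..n}" and AB: "A \<inter> B = {}"
    and cA: "card A = m" and cB: "card B = m" and m: "m \<ge> 1" and p: "0 \<le> p" "p \<le> 1"
  shows "measure_pmf.prob (Gnp n p) {f. \<not> is_hub (adj f) B A} \<le> cut_sum m p + real m * (1-p)^m"
proof -
  let ?P = "measure_pmf.prob (Gnp n p)"
  have "{f. \<not> is_hub (adj f) B A}
      = {f. \<not> connected_in (adj f) B} \<union> {f. \<not> (\<forall>u\<in>A. \<exists>s\<in>B. adj f u s)}"
    by (auto simp: is_hub_def)
  hence "?P {f. \<not> is_hub (adj f) B A}
      \<le> ?P {f. \<not> connected_in (adj f) B} + ?P {f. \<not> (\<forall>u\<in>A. \<exists>s\<in>B. adj f u s)}"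
    by (simp add: measure_subadditive)
  thus ?thesis
    using prob_disconnected[OF B cB m p] prob_not_dominated[OF A B AB p] cA cB by simp
qed

lemma prob_two_partition:
  assumes N1: "N1 \<subseteq> {1..2*m}" and N2: "N2 \<subseteq> {1..2*m}" and disj: "N1 \<inter> N2 = {}"
    and c1: "card N1 = m" and c2: "card N2 = m" and m: "m \<ge> 1" and p: "0 \<le> p" "p \<le> 1"
  shows "1 - 2 * (cut_sum m p + real m * (1-p)^m) \<le> measure_pmf.prob (Gnp (2*m) p)
            {f. r_partition {1..2*m} (adj f) 2 (\<lambda>i. if i = 1 then N1 else N2)
                \<and> (\<forall>k\<ge>1. MG {1..2*m} (adj f) k \<le> 2 * MC k m + 2)}"
proof -
  let ?P = "measure_pmf.prob (Gnp (2*m) p)"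
  let ?Ev = "{f. r_partition {1..2*m} (adj f) 2 (\<lambda>i. if i = 1 then N1 else N2)
                \<and> (\<forall>k\<ge>1. MG {1..2*m} (adj f) k \<le> 2 * MC k m + 2)}"
  have V: "{1..2*m} = N1 \<union> N2" using halves_cover[OF N1 N2 disj c1 c2] .
  define Good where "Good = {f. is_hub (adj f) N2 N1 \<and> is_hub (adj f) N1 N2}"
  have "Good \<subseteq> ?Ev"
    using two_partition_iff_hubs[OF V disj] MG_le_of_two_partition[OF V _ disj c1 c2 _ adj_sym]
    by (auto simp: Good_def V)
  hence "?P Good \<le> ?P ?Ev" by (intro measure_pmf.finite_measure_mono) auto
  have "UNIV - Good = {f. \<not> is_hub (adj f) N2 N1} \<union> {f. \<not> is_hub (adj f) N1 N2}"
    by (auto simp: Good_def)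
  hence "?P (UNIV - Good) \<le> ?P {f. \<not> is_hub (adj f) N2 N1} + ?P {f. \<not> is_hub (adj f) N1 N2}"
    by (simp add: measure_subadditive)
  also have "\<dots> \<le> 2 * (cut_sum m p + real m * (1-p)^m)"
    using prob_not_hub[OF N1 N2 disj c1 c2 m p] prob_not_hub[OF N2 N1 _ c2 c1 m p] disj
    by (simp add: Int_commute)
  finally show ?thesis
    using \<open>?P Good \<le> ?P ?Ev\<close> measure_pmf.prob_compl[of Good "Gnp (2*m) p"] by simp
qed

section \<open>Asymptotics for p = beta ln(2m)/(2m)\<close>

text \<open>The basic estimate 1 - p <= exp(-p), applied to N independent non-edges.\<close>
lemma one_minus_pow_le_exp:
  fixes p a :: real assumes p: "0 \<le> p" "p \<le> 1" and a: "a \<le> p * real N"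
  shows "(1-p)^N \<le> exp (- a)"
proof -
  have "(1-p)^N \<le> exp (-p)^N" using p exp_ge_add_one_self[of "-p"] by (intro power_mono) auto
  also have "\<dots> = exp (- (p * real N))" by (simp add: exp_of_nat_mult[symmetric] mult.commute)
  also have "\<dots> \<le> exp (- a)" using a by simp
  finally show ?thesis .
qed

lemma isolated_term_bound:
  fixes m :: nat and \<beta> \<epsilon> p L :: real
  assumes beta: "\<beta> \<ge> 2 + \<epsilon>" and m: "m \<ge> 1" and L: "L = ln (2 * real m)"
    and pm: "p * m = \<beta> * L / 2" and p: "0 \<le> p" "p \<le> 1"
  shows "real m * (1-p)^m \<le> exp (-(\<epsilon>/2) * L)"
proof -
  have "L \<ge> 0" using L m by simp
  hence "(1 + \<epsilon>/2) * L \<le> (\<beta>/2) * L" using beta by (intro mult_right_mono) auto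
  hence "(1-p)^m \<le> exp (- ((1 + \<epsilon>/2) * L))" using pm by (intro one_minus_pow_le_exp p) simp
  moreover have "real m \<le> exp L" using L m by simp
  ultimately have "real m * (1-p)^m \<le> exp L * exp (- ((1 + \<epsilon>/2) * L))"
    using p by (intro mult_mono) auto
  also have "\<dots> = exp (-(\<epsilon>/2) * L)" by (simp add: exp_add[symmetric] algebra_simps)
  finally show ?thesis .
qed

lemma cut_pairs:
  assumes "2 * j \<le> m"
  shows "real (j * (m - j)) = (real m - real j) * real j" and "real m - real j \<ge> real m / 2"
  using assms by (simp_all add: of_nat_diff)

text \<open>Cut term with a small side, j <= delta m where delta = eps/(2 beta): the cut has at least
  (1 - delta) m j pairs, which beats the m^j choices of the side.\<close>
lemma cut_term_small_side:
  fixes m j :: nat and \<beta> \<epsilon> p L :: real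
  assumes eps: "\<epsilon> > 0" and beta: "\<beta> \<ge> 2 + \<epsilon>" and m: "m \<ge> 1" and L: "L = ln (2 * real m)"
    and pm: "p * m = \<beta> * L / 2" and p: "0 \<le> p" "p \<le> 1"
    and j: "2 * j \<le> m" "real j \<le> \<epsilon> / (2 * \<beta>) * m"
  shows "real (m choose j) * (1-p)^(j*(m-j)) \<le> exp (-(\<epsilon>/4) * L) ^ j"
proof -
  define \<delta> where "\<delta> = \<epsilon> / (2 * \<beta>)"
  have "L \<ge> 0" using L m by simp
  have bpos: "\<beta> > 0" using eps beta by linarith
  have "(1 + \<epsilon>/4) * L \<le> ((\<beta> - \<epsilon>/2) / 2) * L" using beta \<open>L \<ge> 0\<close> by (intro mult_right_mono) auto
  also have "\<dots> = p * ((1 - \<delta>) * m)"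
    using pm bpos by (simp add: \<delta>_def field_simps)
  also have "\<dots> \<le> p * (real m - real j)"
    using j p by (intro mult_left_mono) (auto simp: \<delta>_def algebra_simps)
  finally have "(1 + \<epsilon>/4) * L * j \<le> p * (real m - real j) * j" by (rule mult_right_mono) simp
  hence "(1 + \<epsilon>/4) * L * j \<le> p * real (j * (m - j))" by (subst cut_pairs(1)[OF j(1)]) (simp only: mult.assoc)
  hence "(1-p)^(j*(m-j)) \<le> exp (- ((1 + \<epsilon>/4) * L * j))" by (rule one_minus_pow_le_exp[OF p])
  moreover have "real (m choose j) \<le> exp L ^ j"
  proof -
    have "real (m choose j) \<le> real m ^ j" by (metis binomial_le_pow j(1) le_add2 mult_2 order_trans of_nat_le_iff of_nat_power)
    also have "\<dots> \<le> exp L ^ j" using L m by (simp add: power_mono)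
    finally show ?thesis .
  qed
  ultimately have "real (m choose j) * (1-p)^(j*(m-j)) \<le> exp L ^ j * exp (- ((1 + \<epsilon>/4) * L * j))"
    using p by (intro mult_mono) auto
  also have "\<dots> = exp (-(\<epsilon>/4) * L) ^ j"
    by (simp add: exp_of_nat_mult[symmetric] exp_add[symmetric] algebra_simps)
  finally show ?thesis .
qed

text \<open>Cut term with a large side, delta m < j <= m/2: the cut has at least m j / 2 pairs,
  while the 2^m choices of the side are at most (2^(1/delta))^j.\<close>
lemma cut_term_large_side:
  fixes m j :: nat and \<beta> \<delta> p L :: real
  assumes beta: "\<beta> \<ge> 2" and m: "m \<ge> 1" and L: "L = ln (2 * real m)"
    and pm: "p * m = \<beta> * L / 2" and p: "0 \<le> p" "p \<le> 1" and \<delta>: "\<delta> > 0"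
    and j: "2 * j \<le> m" "\<delta> * m < real j"
  shows "real (m choose j) * (1-p)^(j*(m-j)) \<le> (exp (ln 2 / \<delta>) * exp (- L/2)) ^ j"
proof -
  have "L \<ge> 0" using L m by simp
  have "L / 2 \<le> \<beta> * L / 4" using beta \<open>L \<ge> 0\<close> mult_right_mono[of 2 \<beta> L] by simp
  also have "\<dots> = p * (real m / 2)" using pm by (simp add: algebra_simps)
  also have "\<dots> \<le> p * (real m - real j)" using cut_pairs(2)[OF j(1)] p by (intro mult_left_mono)
  finally have "L / 2 * j \<le> p * (real m - real j) * j" by (rule mult_right_mono) simp
  hence "L / 2 * j \<le> p * real (j * (m - j))" by (subst cut_pairs(1)[OF j(1)]) (simp only: mult.assoc)
  hence "(1-p)^(j*(m-j)) \<le> exp (- (L / 2 * j))" by (rule one_minus_pow_le_exp[OF p])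
  moreover have "real (m choose j) \<le> exp (ln 2 / \<delta>) ^ j"
  proof -
    have "real (m choose j) \<le> 2 ^ m" by (metis binomial_le_pow2 of_nat_le_iff of_nat_numeral of_nat_power)
    also have "(2::real) ^ m = exp (m * ln 2)" by (simp add: exp_of_nat_mult)
    also have "\<dots> \<le> exp (j / \<delta> * ln 2)"
      using j \<delta> by (intro exp_mono mult_right_mono) (auto simp: field_simps mult.commute)
    also have "\<dots> = exp (ln 2 / \<delta>) ^ j" by (simp add: exp_of_nat_mult[symmetric] algebra_simps)
    finally show ?thesis .
  qed
  ultimately have "real (m choose j) * (1-p)^(j*(m-j)) \<le> exp (ln 2 / \<delta>) ^ j * exp (- (L / 2 * j))"
    using p by (intro mult_mono) auto
  also have "\<dots> = (exp (ln 2 / \<delta>) * exp (- L/2)) ^ j"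
    by (simp add: exp_of_nat_mult[symmetric] power_mult_distrib algebra_simps)
  finally show ?thesis .
qed

lemma sum_powers_le:
  fixes x :: real assumes "0 \<le> x" "x < 1"
  shows "(\<Sum>s\<in>{1..K}. x^s) \<le> x / (1 - x)"
proof -
  have "(\<Sum>s\<in>{1..K}. x^s) = x * (\<Sum>s<K. x^s)"
    by (simp add: sum.atLeast1_atMost_eq sum_distrib_left)
  also have "\<dots> = x * (1 - x^K) / (1 - x)"
    using assms by (simp add: sum_gp_strict)
  also have "\<dots> \<le> x / (1 - x)"
    using assms by (intro divide_right_mono) (auto simp: mult_left_le)
  finally show ?thesis .
qed

text \<open>Both cases are dominated by x^s for one ratio x, so cut_sum is at most a geometric series.\<close>
lemma cut_sum_le_geometric:
  fixes m :: nat and \<beta> \<epsilon> p L x :: real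
  assumes eps: "\<epsilon> > 0" and beta: "\<beta> \<ge> 2 + \<epsilon>" and m: "m \<ge> 1" and L: "L = ln (2 * real m)"
    and pm: "p * m = \<beta> * L / 2" and p: "0 \<le> p" "p \<le> 1"
    and x: "x = exp (-(\<epsilon>/4) * L) + exp (ln 2 / (\<epsilon> / (2 * \<beta>))) * exp (- L/2)" and x1: "x < 1"
  shows "cut_sum m p \<le> x / (1 - x)"
proof -
  have \<delta>: "\<epsilon> / (2 * \<beta>) > 0" using eps beta by simp
  have "real (m choose j) * (1-p)^(j*(m-j)) \<le> x ^ j" if "j \<in> {1..m div 2}" for j
  proof -
    have j: "2 * j \<le> m" using that by auto
    show ?thesis
    proof (cases "real j \<le> \<epsilon> / (2 * \<beta>) * m")
      case True
      have "exp (-(\<epsilon>/4) * L) ^ j \<le> x ^ j" using x by (intro power_mono) auto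
      thus ?thesis using cut_term_small_side[OF eps beta m L pm p j True] by linarith
    next
      case False
      have "(exp (ln 2 / (\<epsilon> / (2 * \<beta>))) * exp (- L/2)) ^ j \<le> x ^ j" using x by (intro power_mono) auto
      moreover have "\<beta> \<ge> 2" using beta eps by linarith
      ultimately show ?thesis using cut_term_large_side[OF _ m L pm p \<delta> j] False by force
    qed
  qed
  hence "cut_sum m p \<le> (\<Sum>s\<in>{1..m div 2}. x ^ s)" unfolding cut_sum_def by (rule sum_mono)
  also have "\<dots> \<le> x / (1 - x)" using x x1 by (intro sum_powers_le) auto
  finally show ?thesis .
qed

lemma edge_probability_eventually:
  fixes \<beta> :: real assumes "\<beta> > 0"
  shows "eventually (\<lambda>m. 1 \<le> m \<and> 0 \<le> \<beta> * ln (real (2*m)) / real (2*m)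
                         \<and> \<beta> * ln (real (2*m)) / real (2*m) \<le> 1) sequentially"
proof -
  have "(\<lambda>m::nat. \<beta> * ln (real (2*m)) / real (2*m)) \<longlonglongrightarrow> 0" by real_asymp
  hence "eventually (\<lambda>m. \<beta> * ln (real (2*m)) / real (2*m) < 1) sequentially"
    by (rule order_tendstoD) simp
  moreover have "eventually (\<lambda>m::nat. 1 \<le> m) sequentially" by (rule eventually_ge_at_top)
  ultimately show ?thesis by eventually_elim (use assms in auto)
qed

lemma failure_bound_vanishes:
  fixes \<epsilon> \<beta> :: real
  assumes eps: "\<epsilon> > 0" and beta: "\<beta> \<ge> 2 + \<epsilon>"
  defines "p \<equiv> \<lambda>m::nat. \<beta> * ln (real (2*m)) / real (2*m)"
  shows "(\<lambda>m. cut_sum m (p m) + real m * (1 - p m)^m) \<longlonglongrightarrow> 0"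
proof -
  define L where "L = (\<lambda>m::nat. ln (2 * real m))"
  define x where "x = (\<lambda>m. exp (-(\<epsilon>/4) * L m) + exp (ln 2 / (\<epsilon> / (2 * \<beta>))) * exp (- L m/2))"
  define bound where "bound = (\<lambda>m. x m / (1 - x m) + exp (-(\<epsilon>/2) * L m))"
  define fail where "fail = (\<lambda>m. cut_sum m (p m) + real m * (1 - p m)^m)"
  have lim: "(\<lambda>m. exp (-(\<epsilon>/4) * L m)) \<longlonglongrightarrow> 0" "(\<lambda>m. exp (- L m/2)) \<longlonglongrightarrow> 0"
    "(\<lambda>m. exp (-(\<epsilon>/2) * L m)) \<longlonglongrightarrow> 0"
    unfolding L_def using eps by real_asymp+
  have "x \<longlonglongrightarrow> 0 + exp (ln 2 / (\<epsilon> / (2 * \<beta>))) * 0"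
    unfolding x_def by (intro tendsto_intros lim)
  hence "x \<longlonglongrightarrow> 0" by simp
  hence "bound \<longlonglongrightarrow> 0 / (1 - 0) + 0"
    unfolding bound_def by (intro tendsto_intros lim) auto
  hence "bound \<longlonglongrightarrow> 0" by simp
  have "eventually (\<lambda>m. x m < 1) sequentially"
    using \<open>x \<longlonglongrightarrow> 0\<close> by (rule order_tendstoD) simp
  moreover have "eventually (\<lambda>m. 1 \<le> m \<and> 0 \<le> p m \<and> p m \<le> 1) sequentially"
    unfolding p_def using eps beta by (intro edge_probability_eventually) simp
  ultimately have "eventually (\<lambda>m. 0 \<le> fail m \<and> fail m \<le> bound m) sequentially"
  proof eventually_elim
    case (elim m)
    hence m: "m \<ge> 1" and p: "0 \<le> p m" "p m \<le> 1" and x1: "x m < 1" by auto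
    have pm: "p m * m = \<beta> * L m / 2" using m by (simp add: p_def L_def field_simps)
    have "cut_sum m (p m) \<le> x m / (1 - x m)"
      using cut_sum_le_geometric[OF eps beta m L_def[THEN fun_cong] pm p x_def[THEN fun_cong] x1] .
    moreover have "real m * (1 - p m)^m \<le> exp (-(\<epsilon>/2) * L m)"
      using isolated_term_bound[OF beta m L_def[THEN fun_cong] pm p] .
    moreover have "0 \<le> cut_sum m (p m)" unfolding cut_sum_def using p by (intro sum_nonneg) simp
    moreover have "0 \<le> real m * (1 - p m)^m" using p by simp
    ultimately show ?case unfolding fail_def bound_def by linarith
  qed
  hence "eventually (\<lambda>m. 0 \<le> fail m) sequentially" "eventually (\<lambda>m. fail m \<le> bound m) sequentially"
    by (simp_all add: eventually_conj_iff)
  thus ?thesis unfolding fail_def[symmetric]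
    by (intro tendsto_sandwich[of "\<lambda>_. 0" fail sequentially bound 0]) (simp_all add: \<open>bound \<longlonglongrightarrow> 0\<close>)
qed

theorem theorem8:
  fixes \<epsilon> \<beta> :: real
    and N1 N2 :: "nat \<Rightarrow> nat set"
  assumes "\<epsilon> > 0" and "\<beta> \<ge> 2 + \<epsilon>"
    and "\<And>m. N1 m \<subseteq> {1..2*m} \<and> N2 m \<subseteq> {1..2*m} \<and> N1 m \<inter> N2 m = {}
               \<and> card (N1 m) = m \<and> card (N2 m) = m"
  shows "(\<lambda>m. measure_pmf.prob (Gnp (2*m) (\<beta> * ln (real (2*m)) / real (2*m)))
            {f. r_partition {1..2*m} (adj f) 2 (\<lambda>i. if i = 1 then N1 m else N2 m)
                \<and> (\<forall>k\<ge>1. MG {1..2*m} (adj f) k \<le> 2 * MC k m + 2)})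
         \<longlonglongrightarrow> 1"
    (is "?P \<longlonglongrightarrow> 1")
proof -
  have bpos: "\<beta> > 0" using assms(1,2) by linarith
  define p where "p = (\<lambda>m::nat. \<beta> * ln (real (2*m)) / real (2*m))"
  define fail where "fail = (\<lambda>m. cut_sum m (p m) + real m * (1 - p m)^m)"
  have "fail \<longlonglongrightarrow> 0" using failure_bound_vanishes[OF assms(1,2)] unfolding fail_def p_def .
  hence "(\<lambda>m. 1 - 2 * fail m) \<longlonglongrightarrow> 1 - 2 * 0" by (intro tendsto_intros)
  moreover have "eventually (\<lambda>m. 1 - 2 * fail m \<le> ?P m) sequentially"
    using edge_probability_eventually[OF bpos]
  proof eventually_elim
    case (elim m)
    thus ?case using prob_two_partition assms(3)[of m] unfolding fail_def p_def by simp
  qed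
  ultimately show ?thesis
    by (intro tendsto_sandwich[of _ ?P sequentially "\<lambda>_. 1"]) (auto simp: measure_pmf.prob_le_1)
qed

end
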